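(* For the Markov Transition Model $M$, aggregation scheme $\Phi$, policies $\pi_e,\pi_b$ and offline distribution $\mu_h=d_h^{\pi_b}(\cdot;M)$ of the Example below (with $H\ge2$): (i) $\max_{\pi}\max_{h\in[H]}\max_{x\in\mathcal{X}_h,a\in\mathcal{A}}\frac{d_h^\pi(x,a;M)}{d_h^{\pi_b}(x,a;M)}\le 8H^3$, where the outer maximum ranges over all (non-stationary Markov) policies $\pi$; in particular the standard concentrability coefficient of $\pi_e$ is at most $8H^3$; (ii) for every $\epsilon\le 1/15$, the aggregated concentrability coefficient satisfies $\bar{\mathsf{C}}_\epsilon(M,\Phi,\mu)\ge 2^{H-7}$.
   Context: Example: $H\ge2$; for each $h\in[H]$, $\mathcal{X}_h=\{x_h^{(1)},x_h^{(2)},x_h^{(3)}\}$; $\mathcal{A}=\{a_1,a_2\}$; initial distribution $\rho(x_1^{(1)})=\frac{H-1}{2H}$, $\rho(x_1^{(2)})=\frac{1}{2H}$, $\rho(x_1^{(3)})=\frac12$. For $h\in[H-1]$: under $a_1$, $x_h^{(1)}\to x_{h+1}^{(2)}$, $x_h^{(2)}\to x_{h+1}^{(3)}$, $x_h^{(3)}\to x_{h+1}^{(3)}$ deterministically; under $a_2$, $x_h^{(1)}\to x_{h+1}^{(1)}$ or $x_{h+1}^{(3)}$ each w.p. $1/2$, $x_h^{(2)}\to x_{h+1}^{(2)}$ or $x_{h+1}^{(3)}$ each w.p. $1/2$, $x_h^{(3)}\to x_{h+1}^{(3)}$ w.p. 1. Evaluation policy $\pi_e(x)=a_1$ for all $x$;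 offline policy $\pi_b(a_1|x)=1/H^2$, $\pi_b(a_2|x)=(H^2-1)/H^2$ for all $x$; offline distribution $\mu_h=d_h^{\pi_b}(\cdot;M)$ for all $h\in[H]$. Aggregation: $\Phi_h=\{\phi_h^{(1)},\phi_h^{(2)}\}$ with $\phi_h^{(1)}=\{x_h^{(1)},x_h^{(2)}\}$, $\phi_h^{(2)}=\{x_h^{(3)}\}$. Occupancy: $d_h^\pi(x;M)=\Pr(x_h=x)$ under $x_1\sim\rho$, $a_h\sim\pi(\cdot|x_h)$, $x_{h+1}\sim T(\cdot|x_h,a_h)$; $d_h^\pi(x,a)=d_h^\pi(x)\pi(a|x)$. Aggregated transitions, for $\phi\in\Phi_h,\phi'\in\Phi_{h+1}$: $\bar T(\phi'|\phi,\pi)=\frac{\sum_{x\in\phi}\sum_{x'\in\phi'}\sum_a\pi(a|x)\mu_h(x,a)T(x'|x,a)}{\sum_{x\in\phi}\sum_a\pi(a|x)\mu_h(x,a)}$. Aggregated occupancy $\bar d_h^\pi(\phi)$: law of $\phi_h$ under $\phi_1\sim\bar\rho$, $\phi_{i+1}\sim\bar T(\cdot|\phi_i,\pi)$, $\bar\rho(\phi)=\sum_{x\in\phi}\rho(x)$. Aggregated concentrability: $\bar{\mathsf{C}}_\epsilon(M,\Phi,\mu)=\max_h\max\{\frac{\sum_{\phi\in\mathcal{I}}\bar d_h^{\pi_e}(\phi)}{\sum_{\phi\in\mathcal{I}}\sum_{x\in\phi}\mu_h(x,\pi_e(x))}:\mathcal{I}\subseteq\Phi_h,\ \sum_{\phi\in\mathcal{I}}\bar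 d_h^{\pi_e}(\phi)\ge\epsilon\}$. *)

theory Defs
  imports "HOL-Analysis.Analysis"
begin

text \<open>For each layer h the states x_h^(1), x_h^(2), x_h^(3) are encoded
  by the naturals 1, 2, 3 (the layer is tracked by the index h of the occupancy);
  the actions a_1, a_2 are encoded by 1, 2.
  A (non-stationary Markov) policy is a function pi h x a = pi_h(a|x).\<close>

definition ex_states :: "nat set" where "ex_states = {1, 2, 3}"
definition ex_actions :: "nat set" where "ex_actions = {1, 2}"

definition ex_rho :: "nat \<Rightarrow> nat \<Rightarrow> real" where
  "ex_rho H x = (if x = 1 then (real H - 1) / (2 * real H)
                 else if x = 2 then 1 / (2 * real H)
                 else if x = 3 then 1 / 2 else 0)"

text \<open>ex_T x a x' = T(x_{h+1}^{(x')} | x_h^{(x)}, a), the same for every h in [H-1].\<close>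
definition ex_T :: "nat \<Rightarrow> nat \<Rightarrow> nat \<Rightarrow> real" where
  "ex_T x a x' =
     (if a = 1 then
        (if (x = 1 \<and> x' = 2) \<or> (x = 2 \<and> x' = 3) \<or> (x = 3 \<and> x' = 3) then 1 else 0)
      else if a = 2 then
        (if x = 1 \<and> (x' = 1 \<or> x' = 3) then 1 / 2
         else if x = 2 \<and> (x' = 2 \<or> x' = 3) then 1 / 2
         else if x = 3 \<and> x' = 3 then 1 else 0)
      else 0)"

definition is_policy :: "(nat \<Rightarrow> nat \<Rightarrow> nat \<Rightarrow> real) \<Rightarrow> bool" where
  "is_policy \<pi> \<longleftrightarrow> (\<forall>h x a. 0 \<le> \<pi> h x a) \<and>
                      (\<forall>h x. (\<Sum>a\<in>ex_actions. \<pi> h x a) = 1) \<and>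
                      (\<forall>h x a. a \<notin> ex_actions \<longrightarrow> \<pi> h x a = 0)"

definition pi_e :: "nat \<Rightarrow> nat \<Rightarrow> nat \<Rightarrow> real" where
  "pi_e h x a = (if a = 1 then 1 else 0)"

definition pi_b :: "nat \<Rightarrow> nat \<Rightarrow> nat \<Rightarrow> nat \<Rightarrow> real" where
  "pi_b H h x a = (if a = 1 then 1 / (real H)^2
                   else if a = 2 then ((real H)^2 - 1) / (real H)^2 else 0)"

text \<open>State occupancy d_h^pi(x; M), layers h = 1, 2, ...\<close>
fun occ :: "nat \<Rightarrow> (nat \<Rightarrow> nat \<Rightarrow> nat \<Rightarrow> real) \<Rightarrow> nat \<Rightarrow> nat \<Rightarrow> real" where
  "occ H \<pi> 0 x = 0"
| "occ H \<pi> (Suc 0) x = ex_rho H x"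
| "occ H \<pi> (Suc (Suc k)) x' =
     (\<Sum>x\<in>ex_states. \<Sum>a\<in>ex_actions. occ H \<pi> (Suc k) x * \<pi> (Suc k) x a * ex_T x a x')"

definition occ_sa :: "nat \<Rightarrow> (nat \<Rightarrow> nat \<Rightarrow> nat \<Rightarrow> real) \<Rightarrow> nat \<Rightarrow> nat \<Rightarrow> nat \<Rightarrow> real" where
  "occ_sa H \<pi> h x a = occ H \<pi> h x * \<pi> h x a"

definition mu :: "nat \<Rightarrow> nat \<Rightarrow> nat \<Rightarrow> nat \<Rightarrow> real" where
  "mu H h x a = occ_sa H (pi_b H) h x a"

definition ex_Phi :: "nat set set" where "ex_Phi = {{1, 2}, {3}}"

definition Tbar :: "nat \<Rightarrow> (nat \<Rightarrow> nat \<Rightarrow> nat \<Rightarrow> real) \<Rightarrow> nat \<Rightarrow> nat set \<Rightarrow> nat set \<Rightarrow> real" where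
  "Tbar H \<pi> h \<phi>' \<phi> =
     (\<Sum>x\<in>\<phi>. \<Sum>x'\<in>\<phi>'. \<Sum>a\<in>ex_actions. \<pi> h x a * mu H h x a * ex_T x a x') /
     (\<Sum>x\<in>\<phi>. \<Sum>a\<in>ex_actions. \<pi> h x a * mu H h x a)"

definition rhobar :: "nat \<Rightarrow> nat set \<Rightarrow> real" where
  "rhobar H \<phi> = (\<Sum>x\<in>\<phi>. ex_rho H x)"

fun occbar :: "nat \<Rightarrow> (nat \<Rightarrow> nat \<Rightarrow> nat \<Rightarrow> real) \<Rightarrow> nat \<Rightarrow> nat set \<Rightarrow> real" where
  "occbar H \<pi> 0 \<phi> = 0"
| "occbar H \<pi> (Suc 0) \<phi> = rhobar H \<phi>"
| "occbar H \<pi> (Suc (Suc k)) \<phi>' =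
     (\<Sum>\<phi>\<in>ex_Phi. occbar H \<pi> (Suc k) \<phi> * Tbar H \<pi> (Suc k) \<phi>' \<phi>)"

text \<open>Aggregated concentrability coefficient bar C_eps(M, Phi, mu) for pi_e
  (pi_e(x) = a_1, encoded as action 1).\<close>
definition Cbar :: "nat \<Rightarrow> real \<Rightarrow> real" where
  "Cbar H \<epsilon> = Max {(\<Sum>\<phi>\<in>I. occbar H pi_e h \<phi>) /
                      (\<Sum>\<phi>\<in>I. \<Sum>x\<in>\<phi>. mu H h x 1) | h I.
                     h \<in> {1..H} \<and> I \<subseteq> ex_Phi \<and> (\<Sum>\<phi>\<in>I. occbar H pi_e h \<phi>) \<ge> \<epsilon>}"

end

theory Submission
  imports Defs
begin

text \<open>Under any policy, the mass on states 1 and 2 decays at least like \<open>2\<^sup>-\<^sup>h\<close>, while \<open>\<pi>\<^sub>b\<close>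
  takes \<open>a\<^sub>2\<close> with probability \<open>1 - 1/H\<^sup>2\<close> and so keeps, for \<open>h \<le> H\<close>, at least a \<open>1/H\<close>
  fraction of that decaying mass; state 3 always carries mass at least \<open>1/2\<close>.

  For (ii), aggregation merges states 1 and 2 into one block whose self-transition probability
  under \<open>a\<^sub>1\<close>, weighted by \<open>\<mu>\<close>, is \<open>d(1) / (d(1) + d(2))\<close> for the \<open>\<pi>\<^sub>b\<close>-occupancy \<open>d\<close>. This is
  \<open>1 - O(h/H\<^sup>2)\<close>, so the aggregated model lets \<open>\<pi>\<^sub>e\<close> keep a constant mass in the block up to
  layer \<open>H\<close>, whereas \<open>\<mu>\<close> puts only mass of order \<open>2\<^sup>-\<^sup>h\<close> there.\<close>

lemma prod_le_exp_sum_diff: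
  fixes f :: "'a \<Rightarrow> real"
  assumes "finite A" and "\<And>i. i \<in> A \<Longrightarrow> 0 \<le> f i"
  shows "(\<Prod>i\<in>A. f i) \<le> exp (\<Sum>i\<in>A. f i - 1)"
proof -
  have "f i \<le> exp (f i - 1)" for i
    using exp_ge_add_one_self[of "f i - 1"] by simp
  then have "(\<Prod>i\<in>A. f i) \<le> (\<Prod>i\<in>A. exp (f i - 1))"
    using assms(2) by (intro prod_mono) auto
  then show ?thesis by (simp add: exp_sum assms(1))
qed

lemma exp_two_less: "exp (2::real) < 15/2"
proof -
  have "exp (2::real) = exp 1 * exp 1" by (simp flip: exp_add)
  also have "\<dots> < (272/100) * (272/100)" using e_less_272 by (intro mult_strict_mono) auto
  finally show ?thesis by simp
qed

lemma policy_action_1_eq: "is_policy \<pi> \<Longrightarrow> \<pi> h x 1 = 1 - \<pi> h x 2"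
  unfolding is_policy_def ex_actions_def by (simp add: eq_diff_eq)

lemma policy_nonneg: "is_policy \<pi> \<Longrightarrow> 0 \<le> \<pi> h x a"
  unfolding is_policy_def by auto

lemma policy_le_one:
  assumes "is_policy \<pi>"
  shows "\<pi> h x a \<le> 1"
proof (cases "a \<in> ex_actions")
  case True
  then show ?thesis
    using policy_action_1_eq[OF assms, of h x] policy_nonneg[OF assms, of h x 1]
      policy_nonneg[OF assms, of h x 2]
    by (auto simp: ex_actions_def)
next
  case False
  then show ?thesis using assms unfolding is_policy_def by simp
qed

lemma is_policy_pi_e: "is_policy pi_e"
  unfolding is_policy_def pi_e_def ex_actions_def by auto

lemma is_policy_pi_b:
  assumes "H \<ge> 1"
  shows "is_policy (pi_b H)"
proof -
  have "(real H)^2 \<ge> 1" "(real H)^2 \<noteq> 0" using assms by simp_all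
  then show ?thesis unfolding is_policy_def pi_b_def ex_actions_def
    by (auto simp: field_simps)
qed

lemma occ_Suc_Suc_1: "occ H \<pi> (Suc (Suc k)) 1 = occ H \<pi> (Suc k) 1 * \<pi> (Suc k) 1 2 / 2"
  by (simp add: ex_states_def ex_actions_def ex_T_def)

lemma occ_Suc_Suc_2:
  "occ H \<pi> (Suc (Suc k)) 2 =
     occ H \<pi> (Suc k) 1 * \<pi> (Suc k) 1 1 + occ H \<pi> (Suc k) 2 * \<pi> (Suc k) 2 2 / 2"
  by (simp add: ex_states_def ex_actions_def ex_T_def)

lemma occ_Suc_Suc_3:
  "occ H \<pi> (Suc (Suc k)) 3 =
     occ H \<pi> (Suc k) 1 * \<pi> (Suc k) 1 2 / 2 + occ H \<pi> (Suc k) 2 * \<pi> (Suc k) 2 1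
     + occ H \<pi> (Suc k) 2 * \<pi> (Suc k) 2 2 / 2 + occ H \<pi> (Suc k) 3 * (\<pi> (Suc k) 3 1 + \<pi> (Suc k) 3 2)"
  by (simp add: ex_states_def ex_actions_def ex_T_def algebra_simps)

lemma occ_nonneg:
  assumes "is_policy \<pi>"
  shows "0 \<le> occ H \<pi> (Suc k) x"
proof (induction k arbitrary: x)
  case 0
  show ?case by (cases H) (auto simp: ex_rho_def)
next
  case (Suc k)
  show ?case unfolding occ.simps
    by (intro sum_nonneg mult_nonneg_nonneg Suc policy_nonneg[OF assms]) (simp add: ex_T_def)
qed

lemma occ_1_le:
  assumes "is_policy \<pi>"
  shows "occ H \<pi> (Suc k) 1 \<le> (real H - 1) / (2 * real H) * (1/2)^k"
proof (induction k)
  case 0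
  show ?case by (simp add: ex_rho_def)
next
  case (Suc k)
  have "occ H \<pi> (Suc k) 1 * \<pi> (Suc k) 1 2 \<le> occ H \<pi> (Suc k) 1"
    using occ_nonneg[OF assms] policy_le_one[OF assms] by (simp add: mult_left_le)
  then show ?case using Suc unfolding occ_Suc_Suc_1 by simp
qed

text \<open>Mass enters states 1 and 2 only at layer 1, and with weight 2 on state 1 this potential
  at least halves from one layer to the next under either action.\<close>
lemma occ_2_plus_twice_occ_1_le:
  assumes "is_policy \<pi>"
  shows "occ H \<pi> (Suc k) 2 + 2 * occ H \<pi> (Suc k) 1 \<le> (1/2)^k"
proof (induction k)
  case 0
  show ?case by (cases H) (auto simp: ex_rho_def field_simps)
next
  case (Suc k)
  have "occ H \<pi> (Suc k) 2 * \<pi> (Suc k) 2 2 \<le> occ H \<pi> (Suc k) 2"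
    using occ_nonneg[OF assms] policy_le_one[OF assms] by (simp add: mult_left_le)
  moreover have "occ H \<pi> (Suc (Suc k)) 2 + 2 * occ H \<pi> (Suc (Suc k)) 1
      = occ H \<pi> (Suc k) 1 + occ H \<pi> (Suc k) 2 * \<pi> (Suc k) 2 2 / 2"
    unfolding occ_Suc_Suc_1 occ_Suc_Suc_2 policy_action_1_eq[OF assms]
    by (simp add: algebra_simps)
  ultimately show ?case using Suc by simp
qed

lemma occ_total:
  assumes "is_policy \<pi>" and "H \<ge> 1"
  shows "occ H \<pi> (Suc k) 1 + occ H \<pi> (Suc k) 2 + occ H \<pi> (Suc k) 3 = 1"
proof (induction k)
  case 0
  show ?case using assms(2) by (simp add: ex_rho_def field_simps)
next
  case (Suc k)
  then show ?case
    unfolding occ_Suc_Suc_1 occ_Suc_Suc_2 occ_Suc_Suc_3 policy_action_1_eq[OF assms(1)]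
    by (simp add: algebra_simps)
qed

lemma occ_3_ge:
  assumes "is_policy \<pi>"
  shows "1/2 \<le> occ H \<pi> (Suc k) 3"
proof (induction k)
  case 0
  show ?case by (simp add: ex_rho_def)
next
  case (Suc k)
  have "0 \<le> occ H \<pi> (Suc k) 1 * \<pi> (Suc k) 1 2 / 2 + occ H \<pi> (Suc k) 2 * \<pi> (Suc k) 2 1
      + occ H \<pi> (Suc k) 2 * \<pi> (Suc k) 2 2 / 2"
    using occ_nonneg[OF assms] policy_nonneg[OF assms] by simp
  then show ?case
    using Suc unfolding occ_Suc_Suc_3 policy_action_1_eq[OF assms, of "Suc k" 3] by simp
qed

definition pi_b2 :: "nat \<Rightarrow> real" where
  "pi_b2 H = 1 - 1 / (real H)^2"

lemma pi_b_action_1: "pi_b H h x 1 = 1 - pi_b2 H"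
  by (simp add: pi_b_def pi_b2_def)

lemma pi_b_action_2: "H \<ge> 1 \<Longrightarrow> pi_b H h x 2 = pi_b2 H"
  by (simp add: pi_b_def pi_b2_def diff_divide_distrib)

lemma pi_b2_nonneg: "H \<ge> 1 \<Longrightarrow> 0 \<le> pi_b2 H"
  by (simp add: pi_b2_def)

lemma pi_b2_pow_ge:
  assumes "H \<ge> 1" and "k \<le> H - 1"
  shows "3/4 \<le> pi_b2 H ^ k"
proof -
  have k: "real k \<le> real H - 1" using assms by linarith
  have H2: "0 < (real H)^2" "1 \<le> (real H)^2" using assms(1) by simp_all
  have "4 * (real H - 1) \<le> (real H)^2"
    using zero_le_power2[of "real H - 2"] by (simp add: power2_eq_square algebra_simps)
  then have "(real H - 1) / (real H)^2 \<le> 1/4"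
    using H2 by (simp add: pos_divide_le_eq)
  then have "3/4 \<le> 1 - (real H - 1) / (real H)^2" by simp
  also have "\<dots> \<le> 1 - real k / (real H)^2"
    using divide_right_mono[OF k, of "(real H)^2"] by simp
  also have "\<dots> = 1 + real k * (- 1 / (real H)^2)" by simp
  also have "\<dots> \<le> (1 + - 1 / (real H)^2) ^ k"
    by (rule Bernoulli_inequality) (use H2 in simp)
  also have "\<dots> = pi_b2 H ^ k" by (simp add: pi_b2_def)
  finally show ?thesis .
qed

lemma occ_pi_b_1:
  assumes "H \<ge> 1"
  shows "occ H (pi_b H) (Suc k) 1 = (real H - 1) / (2 * real H) * (pi_b2 H / 2)^k"
proof (induction k)
  case 0
  show ?case by (simp add: ex_rho_def)
next
  case (Suc k)
  show ?case unfolding occ_Suc_Suc_1 Suc pi_b_action_2[OF assms] by simp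
qed

lemma occ_pi_b_2_ge:
  assumes "H \<ge> 1"
  shows "1 / (2 * real H) * (pi_b2 H / 2)^k \<le> occ H (pi_b H) (Suc k) 2"
proof (induction k)
  case 0
  show ?case by (simp add: ex_rho_def)
next
  case (Suc k)
  have "0 \<le> occ H (pi_b H) (Suc k) 1 * pi_b H (Suc k) 1 1"
    using occ_nonneg policy_nonneg is_policy_pi_b[OF assms] by simp
  moreover have "1 / (2 * real H) * (pi_b2 H / 2)^k * (pi_b2 H / 2)
      \<le> occ H (pi_b H) (Suc k) 2 * (pi_b2 H / 2)"
    using Suc pi_b2_nonneg[OF assms] by (intro mult_right_mono) auto
  ultimately show ?case
    unfolding occ_Suc_Suc_2 pi_b_action_2[OF assms] by (simp add: field_simps)
qed

lemma occ_1_le_twice_occ_pi_b: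
  assumes "is_policy \<pi>" and "H \<ge> 1" and "k \<le> H - 1"
  shows "occ H \<pi> (Suc k) 1 \<le> 2 * occ H (pi_b H) (Suc k) 1"
proof -
  define A where "A = (real H - 1) / (2 * real H) * (1/2)^k"
  have "0 \<le> A" using assms(2) by (simp add: A_def)
  then have "A \<le> 2 * (A * (3/4))" by simp
  also have "\<dots> \<le> 2 * (A * pi_b2 H ^ k)"
    using pi_b2_pow_ge[OF assms(2,3)] \<open>0 \<le> A\<close> by (intro mult_left_mono) auto
  also have "A * pi_b2 H ^ k = occ H (pi_b H) (Suc k) 1"
    unfolding occ_pi_b_1[OF assms(2)] A_def by (simp add: power_divide)
  finally show ?thesis using occ_1_le[OF assms(1), of H k] by (simp add: A_def)
qed

lemma occ_2_le_occ_pi_b: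
  assumes "is_policy \<pi>" and "H \<ge> 1" and "k \<le> H - 1"
  shows "occ H \<pi> (Suc k) 2 \<le> 4 * real H * occ H (pi_b H) (Suc k) 2"
proof -
  have "occ H \<pi> (Suc k) 2 \<le> (1/2)^k"
    using occ_2_plus_twice_occ_1_le[OF assms(1), of H k] occ_nonneg[OF assms(1), of H k 1]
    by linarith
  also have "\<dots> \<le> 2 * ((1/2)^k * (3/4))" by simp
  also have "\<dots> \<le> 2 * ((1/2)^k * pi_b2 H ^ k)"
    using pi_b2_pow_ge[OF assms(2,3)] by (intro mult_left_mono) auto
  also have "\<dots> = 4 * real H * (1 / (2 * real H) * (pi_b2 H / 2)^k)"
    using assms(2) by (simp add: power_divide)
  also have "\<dots> \<le> 4 * real H * occ H (pi_b H) (Suc k) 2"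
    using occ_pi_b_2_ge[OF assms(2)] by (intro mult_left_mono) auto
  finally show ?thesis .
qed

lemma occ_3_le_twice_occ_pi_b:
  assumes "is_policy \<pi>" and "H \<ge> 1"
  shows "occ H \<pi> (Suc k) 3 \<le> 2 * occ H (pi_b H) (Suc k) 3"
  using occ_total[OF assms, of k] occ_nonneg[OF assms(1), of H k 1] occ_nonneg[OF assms(1), of H k 2]
    occ_3_ge[OF is_policy_pi_b[OF assms(2)], of H k]
  by linarith

lemma occ_le_occ_pi_b:
  assumes "is_policy \<pi>" and "H \<ge> 1" and "k \<le> H - 1" and "x \<in> ex_states"
  shows "occ H \<pi> (Suc k) x \<le> 4 * real H * occ H (pi_b H) (Suc k) x"
proof -
  have twice_le: "2 * occ H (pi_b H) (Suc k) y \<le> 4 * real H * occ H (pi_b H) (Suc k) y" for y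
    using assms(2) occ_nonneg[OF is_policy_pi_b[OF assms(2)]] by (intro mult_right_mono) auto
  consider "x = 1" | "x = 2" | "x = 3" using assms(4) by (auto simp: ex_states_def)
  then show ?thesis
  proof cases
    case 1
    then show ?thesis using occ_1_le_twice_occ_pi_b[OF assms(1-3)] twice_le[of 1] by simp
  next
    case 2
    then show ?thesis using occ_2_le_occ_pi_b[OF assms(1-3)] by simp
  next
    case 3
    then show ?thesis
      using occ_3_le_twice_occ_pi_b[OF assms(1,2), where k = k] twice_le[of 3] by simp
  qed
qed

lemma four_le_real_sq: "H \<ge> 2 \<Longrightarrow> 4 \<le> (real H)^2"
  using power_mono[of 2 "real H" 2] by simp

lemma pi_b_ge:
  assumes "H \<ge> 2" and "a \<in> ex_actions"
  shows "1 / (real H)^2 \<le> pi_b H h x a"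
proof -
  have "2 \<le> (real H)^2" using four_le_real_sq[OF assms(1)] by simp
  then show ?thesis using assms(2) by (auto simp: pi_b_def ex_actions_def divide_right_mono)
qed

lemma occ_pi_b_pos:
  assumes "H \<ge> 2" and "x \<in> ex_states"
  shows "0 < occ H (pi_b H) (Suc k) x"
proof -
  have q: "0 < pi_b2 H" using four_le_real_sq[OF assms(1)] by (auto simp: pi_b2_def divide_less_eq_1)
  then have lower_2: "0 < 1 / (2 * real H) * (pi_b2 H / 2)^k" using assms(1) by simp
  have "0 < occ H (pi_b H) (Suc k) 1" using q assms(1) occ_pi_b_1[of H k] by auto
  moreover have "0 < occ H (pi_b H) (Suc k) 2"
    using lower_2 occ_pi_b_2_ge[of H k] assms(1) by linarith
  moreover have "0 < occ H (pi_b H) (Suc k) 3"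
    using occ_3_ge[OF is_policy_pi_b, of H H k] assms(1) by simp
  ultimately show ?thesis using assms(2) by (auto simp: ex_states_def)
qed

lemma occ_sa_ratio_le:
  assumes "is_policy \<pi>" and "H \<ge> 2" and "h \<in> {1..H}" and "x \<in> ex_states" and "a \<in> ex_actions"
  shows "occ_sa H \<pi> h x a / occ_sa H (pi_b H) h x a \<le> 4 * (real H)^3"
proof -
  obtain k where h: "h = Suc k" and k: "k \<le> H - 1" using assms(3) by (cases h) auto
  have b_pos: "0 < occ H (pi_b H) h x" using occ_pi_b_pos[OF assms(2,4)] h by simp
  have "occ_sa H \<pi> h x a \<le> occ H \<pi> h x"
    unfolding occ_sa_def h using occ_nonneg[OF assms(1)] policy_le_one[OF assms(1)]
    by (simp add: mult_left_le)
  also have "\<dots> \<le> 4 * real H * occ H (pi_b H) h x"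
    unfolding h using occ_le_occ_pi_b[OF assms(1) _ k assms(4)] assms(2) by simp
  also have "\<dots> = 4 * (real H)^3 * (occ H (pi_b H) h x * (1 / (real H)^2))"
    using assms(2) by (simp add: power2_eq_square power3_eq_cube)
  also have "\<dots> \<le> 4 * (real H)^3 * occ_sa H (pi_b H) h x a"
    unfolding occ_sa_def using pi_b_ge[OF assms(2,5)] b_pos
    by (intro mult_left_mono) auto
  moreover have "0 < occ_sa H (pi_b H) h x a"
  proof -
    have "0 < 1 / (real H)^2" using assms(2) by simp
    then have "0 < pi_b H h x a" using pi_b_ge[OF assms(2,5)] by (rule order_less_le_trans)
    then show ?thesis unfolding occ_sa_def using b_pos by simp
  qed
  ultimately show ?thesis by (simp add: pos_divide_le_eq)
qed

text \<open>\<open>agg_factor H i - 1\<close> is the ratio of the \<open>\<pi>\<^sub>b\<close>-occupancies of states 2 and 1 at layer \<open>i\<close>;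
  it grows by \<open>2 / (H\<^sup>2 - 1)\<close> per layer.\<close>
definition agg_factor :: "nat \<Rightarrow> nat \<Rightarrow> real" where
  "agg_factor H i = ((real H)^2 + real H + 2 * real i - 2) / ((real H)^2 - 1)"

lemma agg_factor_pos:
  assumes "H \<ge> 2"
  shows "0 < agg_factor H i"
  using assms four_le_real_sq[OF assms] by (simp add: agg_factor_def)

lemma occ_pi_b_2_eq:
  assumes "H \<ge> 2"
  shows "occ H (pi_b H) (Suc k) 2 = occ H (pi_b H) (Suc k) 1 * (agg_factor H (Suc k) - 1)"
proof -
  have D: "(real H)^2 - 1 \<noteq> 0" "(real H)^2 \<noteq> 0" "real H - 1 \<noteq> 0"
    using four_le_real_sq[OF assms] assms by auto
  have H1: "H \<ge> 1" using assms by simp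
  have step: "agg_factor H (Suc (Suc j)) = agg_factor H (Suc j) + 2 / ((real H)^2 - 1)" for j
    unfolding agg_factor_def add_divide_distrib[symmetric] by (simp add: algebra_simps)
  have key: "1 - pi_b2 H = pi_b2 H / ((real H)^2 - 1)"
    using D by (simp add: pi_b2_def field_simps)
  show ?thesis
  proof (induction k)
    case 0
    show ?case using D by (simp add: ex_rho_def agg_factor_def field_simps power2_eq_square)
  next
    case (Suc k)
    show ?case
      unfolding occ_Suc_Suc_1 occ_Suc_Suc_2 Suc step pi_b_action_1
        pi_b_action_2[OF H1] key
      using D by (simp add: field_simps)
  qed
qed

lemma Tbar_pi_e_12_12:
  assumes "H \<ge> 2"
  shows "Tbar H pi_e (Suc k) {1, 2} {1, 2} = 1 / agg_factor H (Suc k)"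
proof -
  have mu: "mu H (Suc k) x 1 = occ H (pi_b H) (Suc k) x / (real H)^2" for x
    by (simp add: mu_def occ_sa_def pi_b_def)
  have "Tbar H pi_e (Suc k) {1, 2} {1, 2} = mu H (Suc k) 1 1 / (mu H (Suc k) 1 1 + mu H (Suc k) 2 1)"
    by (simp add: Tbar_def ex_actions_def ex_T_def pi_e_def)
  also have "\<dots> = 1 / agg_factor H (Suc k)"
    using assms occ_pi_b_pos[OF assms, of 1 k] agg_factor_pos[OF assms, of "Suc k"]
    unfolding mu occ_pi_b_2_eq[OF assms] by (simp add: ex_states_def field_simps)
  finally show ?thesis .
qed

lemma occbar_pi_e_12:
  assumes "H \<ge> 2"
  shows "occbar H pi_e (Suc k) {1, 2} = (1/2) / (\<Prod>i\<in>{1..k}. agg_factor H i)"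
proof (induction k)
  case 0
  show ?case using assms by (simp add: rhobar_def ex_rho_def field_simps)
next
  case (Suc k)
  have "Tbar H pi_e (Suc k) {1, 2} {3} = 0"
    by (simp add: Tbar_def ex_actions_def ex_T_def pi_e_def)
  then have "occbar H pi_e (Suc (Suc k)) {1, 2}
      = occbar H pi_e (Suc k) {1, 2} * Tbar H pi_e (Suc k) {1, 2} {1, 2}"
    by (simp add: ex_Phi_def doubleton_eq_iff)
  then show ?case
    using agg_factor_pos[OF assms, of "Suc k"]
    unfolding Suc Tbar_pi_e_12_12[OF assms] by (simp add: prod.cl_ivl_Suc)
qed

lemma sum_agg_factor_minus_one:
  assumes "H \<ge> 2"
  shows "(\<Sum>i\<in>{1..n}. agg_factor H i - 1) = real n * (real H + real n) / ((real H)^2 - 1)"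
proof (induction n)
  case 0
  show ?case by simp
next
  case (Suc n)
  have D: "(real H)^2 - 1 \<noteq> 0" using four_le_real_sq[OF assms] by auto
  have "agg_factor H (Suc n) - 1 = (real H + 2 * real (Suc n) - 1) / ((real H)^2 - 1)"
    using D unfolding agg_factor_def by (simp add: field_simps)
  then show ?case
    using Suc D by (simp add: add_divide_distrib[symmetric] algebra_simps)
qed

lemma prod_agg_factor_le_exp_2:
  assumes "H \<ge> 2" and "n \<le> H - 1"
  shows "(\<Prod>i\<in>{1..n}. agg_factor H i) \<le> exp 2"
proof -
  have n: "real n \<le> real H - 1" using assms by linarith
  have "real n * (real H + real n) \<le> (real H - 1) * (2 * real H - 1)"
    using n assms(1) by (intro mult_mono) auto
  also have "\<dots> \<le> 2 * ((real H)^2 - 1)"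
    using assms(1) by (simp add: power2_eq_square algebra_simps)
  finally have sum_le: "(\<Sum>i\<in>{1..n}. agg_factor H i - 1) \<le> 2"
    unfolding sum_agg_factor_minus_one[OF assms(1)]
    using four_le_real_sq[OF assms(1)] by (simp add: pos_divide_le_eq)
  have "(\<Prod>i\<in>{1..n}. agg_factor H i) \<le> exp (\<Sum>i\<in>{1..n}. agg_factor H i - 1)"
    using agg_factor_pos[OF assms(1)] by (intro prod_le_exp_sum_diff) (auto intro: less_imp_le)
  also have "\<dots> \<le> exp 2" using sum_le by simp
  finally show ?thesis .
qed

lemma prod_agg_factor_le_sq:
  assumes "H \<ge> 2" and "n \<le> H - 1"
  shows "(\<Prod>i\<in>{1..n}. agg_factor H i) \<le> (real H)^2"
proof (cases "H = 2")
  case True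
  then have "n = 0 \<or> n = 1" using assms(2) by auto
  then show ?thesis using True by (auto simp: agg_factor_def)
next
  case False
  then have "9 \<le> (real H)^2" using power_mono[of 3 "real H" 2] assms(1) by simp
  then show ?thesis using prod_agg_factor_le_exp_2[OF assms] exp_two_less by linarith
qed

lemma ratio_le_Cbar:
  assumes "h \<in> {1..H}" and "I \<subseteq> ex_Phi" and "\<epsilon> \<le> (\<Sum>\<phi>\<in>I. occbar H pi_e h \<phi>)"
  shows "(\<Sum>\<phi>\<in>I. occbar H pi_e h \<phi>) / (\<Sum>\<phi>\<in>I. \<Sum>x\<in>\<phi>. mu H h x 1) \<le> Cbar H \<epsilon>"
proof -
  let ?r = "\<lambda>(h, I). (\<Sum>\<phi>\<in>I. occbar H pi_e h \<phi>) / (\<Sum>\<phi>\<in>I. \<Sum>x\<in>\<phi>. mu H h x 1)"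
  let ?S = "{(\<Sum>\<phi>\<in>I. occbar H pi_e h \<phi>) / (\<Sum>\<phi>\<in>I. \<Sum>x\<in>\<phi>. mu H h x 1) | h I.
              h \<in> {1..H} \<and> I \<subseteq> ex_Phi \<and> (\<Sum>\<phi>\<in>I. occbar H pi_e h \<phi>) \<ge> \<epsilon>}"
  have "?S \<subseteq> ?r ` ({1..H} \<times> Pow ex_Phi)" by auto
  then have "finite ?S" by (rule finite_subset) (simp add: ex_Phi_def)
  moreover have "?r (h, I) \<in> ?S" using assms by auto
  ultimately show ?thesis unfolding Cbar_def by (simp add: Max_ge)
qed

lemma agg_ratio_12_eq:
  assumes "H \<ge> 2"
  shows "occbar H pi_e (Suc n) {1, 2} / (mu H (Suc n) 1 1 + mu H (Suc n) 2 1)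
    = (real H)^2 / (2 * occ H (pi_b H) (Suc n) 1 * (\<Prod>i\<in>{1..Suc n}. agg_factor H i))"
proof -
  have mu: "mu H (Suc n) 1 1 + mu H (Suc n) 2 1
      = occ H (pi_b H) (Suc n) 1 * agg_factor H (Suc n) / (real H)^2"
    using assms by (simp add: mu_def occ_sa_def pi_b_def occ_pi_b_2_eq[OF assms] field_simps)
  have "0 < (\<Prod>i\<in>{1..n}. agg_factor H i)"
    using agg_factor_pos[OF assms] by (simp add: prod_pos)
  then show ?thesis
    unfolding mu occbar_pi_e_12[OF assms] prod.cl_ivl_Suc
    using assms occ_pi_b_pos[OF assms, of 1 n] agg_factor_pos[OF assms, of "Suc n"]
    by (simp add: ex_states_def field_simps)
qed

lemma two_pow_le_Cbar:
  assumes "H \<ge> 2" and "\<epsilon> \<le> 1/15" and "n \<le> H - 2"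
  shows "2 ^ n \<le> Cbar H \<epsilon>"
proof -
  have H1: "H \<ge> 1" using assms(1) by simp
  let ?P = "\<lambda>m. \<Prod>i\<in>{1..m}. agg_factor H i"
  let ?o1 = "occ H (pi_b H) (Suc n) 1"
  have P_pos: "0 < ?P m" for m using agg_factor_pos[OF assms(1)] by (simp add: prod_pos)
  have o1_pos: "0 < ?o1" using occ_pi_b_pos[OF assms(1)] by (simp add: ex_states_def)
  have "n \<le> H - 1" using assms(3) by simp
  then have "?P n \<le> 15/2"
    using prod_agg_factor_le_exp_2[OF assms(1)] exp_two_less by fastforce
  then have "(1/2) / (15/2) \<le> (1/2) / ?P n"
    using P_pos[of n] by (intro divide_left_mono) auto
  then have "\<epsilon> \<le> occbar H pi_e (Suc n) {1, 2}"
    unfolding occbar_pi_e_12[OF assms(1)] using assms(2) by simp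
  then have "occbar H pi_e (Suc n) {1, 2} / (mu H (Suc n) 1 1 + mu H (Suc n) 2 1) \<le> Cbar H \<epsilon>"
    using ratio_le_Cbar[of "Suc n" H "{{1, 2}}" \<epsilon>] assms(1,3) by (simp add: ex_Phi_def)
  moreover have "2 ^ n \<le> (real H)^2 / (2 * ?o1 * ?P (Suc n))"
  proof -
    have "(real H - 1) / (2 * real H) \<le> 1/2" using assms(1) by (simp add: field_simps)
    then have "(real H - 1) / (2 * real H) * (1/2)^n \<le> 1/2 * (1/2)^n"
      by (rule mult_right_mono) simp
    then have "2 * ?o1 \<le> (1/2)^n"
      using occ_1_le[OF is_policy_pi_b[OF H1], of H n] by linarith
    moreover have "?P (Suc n) \<le> (real H)^2"
      using assms(1,3) by (intro prod_agg_factor_le_sq) auto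
    ultimately have "2 * ?o1 * ?P (Suc n) \<le> (1/2)^n * (real H)^2"
      using o1_pos P_pos[of "Suc n"] by (intro mult_mono) auto
    then have "(real H)^2 / ((1/2)^n * (real H)^2) \<le> (real H)^2 / (2 * ?o1 * ?P (Suc n))"
      using o1_pos P_pos[of "Suc n"] assms(1) by (intro divide_left_mono) auto
    then show ?thesis using assms(1) by (simp add: power_one_over)
  qed
  ultimately show ?thesis unfolding agg_ratio_12_eq[OF assms(1)] by linarith
qed

theorem mainTheorem4:
  fixes H :: nat
  assumes "H \<ge> 2"
  shows "(\<forall>\<pi>. is_policy \<pi> \<longrightarrow>
           (\<forall>h\<in>{1..H}. \<forall>x\<in>ex_states. \<forall>a\<in>ex_actions.
              occ_sa H \<pi> h x a / occ_sa H (pi_b H) h x a \<le> 8 * (real H)^3))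
       \<and> (\<forall>h\<in>{1..H}. \<forall>x\<in>ex_states. \<forall>a\<in>ex_actions.
              occ_sa H pi_e h x a / occ_sa H (pi_b H) h x a \<le> 8 * (real H)^3)
       \<and> (\<forall>\<epsilon>::real. \<epsilon> \<le> 1/15 \<longrightarrow> Cbar H \<epsilon> \<ge> 2 powr (real H - 7))"
proof -
  have "4 * (real H)^3 \<le> 8 * (real H)^3" by simp
  then have concentrability: "occ_sa H \<pi> h x a / occ_sa H (pi_b H) h x a \<le> 8 * (real H)^3"
    if "is_policy \<pi>" "h \<in> {1..H}" "x \<in> ex_states" "a \<in> ex_actions" for \<pi> h x a
    using occ_sa_ratio_le[OF that(1) assms that(2-4)] by linarith
  have "2 powr (real H - 7) \<le> 2 ^ (H - 7)"
    by (simp add: powr_realpow[symmetric])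
  moreover have "H - 7 \<le> H - 2" by (rule diff_le_mono2) simp
  ultimately have "Cbar H \<epsilon> \<ge> 2 powr (real H - 7)" if "\<epsilon> \<le> 1/15" for \<epsilon>
    using two_pow_le_Cbar[OF assms that, of "H - 7"] by linarith
  then show ?thesis using concentrability is_policy_pi_e by blast
qed

end
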